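(* (Sufficient condition for negative transfer.) Let $\eta_i\ge0$ with $\sum\eta_i<\infty$, let $N_A,N_B>0$ be arbitrary, and suppose $E_B:=\sum_iE_{B,i}>0$. If $\rho<\sqrt{\gamma_A}/(1+\sqrt{\gamma_A})$, then \[ E_{A\to B}(\rho):=\sum_i\Big[2(1-\rho)(1-q_{A,i})+\frac{q_{A,i}^2}{1-\gamma_A}\Big]E_{B,i}\;>\;E_B . \] Indeed each mode satisfies $2(1-\rho)(1-q)+q^2/(1-\gamma_A)>1$ for all real $q$ under this condition.
   Context: For sample size $N$: $\kappa>0$ solves $1=\sum_i\eta_i/(\kappa+N\eta_i)$, $\gamma=\sum_iN\eta_i^2/(\kappa+N\eta_i)^2$, $q_i=\kappa/(\kappa+N\eta_i)$; subscripts $A,B$ denote $N=N_A,N_B$. $E_{B,i}=q_{B,i}^2\eta_i^2/(1-\gamma_B)$. $E_{A\to B}(\rho)$ is the (replica-method) generalization error on task B after sequential training A→B with target similarity $\rho$, and $E_B$ the single-task error on B. *)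

theory Defs
  imports "HOL-Analysis.Analysis"
begin

definition is_kappa :: "(nat \<Rightarrow> real) \<Rightarrow> real \<Rightarrow> real \<Rightarrow> bool" where
  "is_kappa \<eta> N \<kappa> \<longleftrightarrow> \<kappa> > 0 \<and> (\<lambda>i. \<eta> i / (\<kappa> + N * \<eta> i)) sums 1"

definition gam :: "(nat \<Rightarrow> real) \<Rightarrow> real \<Rightarrow> real \<Rightarrow> real" where
  "gam \<eta> N \<kappa> = (\<Sum>i. N * (\<eta> i)\<^sup>2 / (\<kappa> + N * \<eta> i)\<^sup>2)"

definition qq :: "(nat \<Rightarrow> real) \<Rightarrow> real \<Rightarrow> real \<Rightarrow> nat \<Rightarrow> real" where
  "qq \<eta> N \<kappa> i = \<kappa> / (\<kappa> + N * \<eta> i)"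

definition EBi :: "(nat \<Rightarrow> real) \<Rightarrow> real \<Rightarrow> real \<Rightarrow> nat \<Rightarrow> real" where
  "EBi \<eta> NB \<kappa>B i = (qq \<eta> NB \<kappa>B i)\<^sup>2 * (\<eta> i)\<^sup>2 / (1 - gam \<eta> NB \<kappa>B)"

definition EB :: "(nat \<Rightarrow> real) \<Rightarrow> real \<Rightarrow> real \<Rightarrow> real" where
  "EB \<eta> NB \<kappa>B = (\<Sum>i. EBi \<eta> NB \<kappa>B i)"

definition EAB :: "(nat \<Rightarrow> real) \<Rightarrow> real \<Rightarrow> real \<Rightarrow> real \<Rightarrow> real \<Rightarrow> real \<Rightarrow> real" where
  "EAB \<eta> NA \<kappa>A NB \<kappa>B \<rho> =
     (\<Sum>i. (2 * (1 - \<rho>) * (1 - qq \<eta> NA \<kappa>A i)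
            + (qq \<eta> NA \<kappa>A i)\<^sup>2 / (1 - gam \<eta> NA \<kappa>A)) * EBi \<eta> NB \<kappa>B i)"

end

theory Submission
  imports Defs
begin

text \<open>The self-consistency equation gives \<open>1 - \<gamma> = \<Sum>\<^sub>i \<kappa> \<eta>\<^sub>i / (\<kappa> + N \<eta>\<^sub>i)\<^sup>2 > 0\<close>.
  With \<open>s = 1 - \<rho>\<close> and \<open>r = sqrt \<gamma>\<^sub>A\<close> the hypothesis on \<open>\<rho>\<close> reads \<open>s (1 + r) > 1\<close>, so for \<open>q < 1\<close>
  \<open>2 s (1 - \<gamma>\<^sub>A) (1 - q) + q\<^sup>2 - (1 - \<gamma>\<^sub>A) > 2 (1 - r) (1 - q) + q\<^sup>2 - (1 - r\<^sup>2) = (q - (1 - r))\<^sup>2 \<ge> 0\<close>.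
  Thus every mode with \<open>\<eta>\<^sub>i > 0\<close> (equivalently \<open>q\<^sub>A\<^sub>,\<^sub>i < 1\<close>) enters \<open>E\<^sub>A\<^sub>\<rightarrow>\<^sub>B\<close> with a weight
  larger than one, modes with \<open>\<eta>\<^sub>i = 0\<close> contribute to neither error, and \<open>E\<^sub>B > 0\<close> makes
  some weighted mode count.\<close>

lemma is_kappa_denom_pos:
  assumes "is_kappa \<eta> N \<kappa>" "N \<ge> 0" "\<eta> i \<ge> 0"
  shows "\<kappa> + N * \<eta> i > 0"
proof -
  have "\<kappa> > 0" using assms(1) by (simp add: is_kappa_def)
  moreover have "N * \<eta> i \<ge> 0" using assms(2,3) by simp
  ultimately show ?thesis by linarith
qed

lemma qq_pos:
  assumes "is_kappa \<eta> N \<kappa>" "N \<ge> 0" "\<eta> i \<ge> 0"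
  shows "qq \<eta> N \<kappa> i > 0"
  using is_kappa_denom_pos[OF assms] assms(1) by (simp add: qq_def is_kappa_def)

lemma qq_le_one:
  assumes "is_kappa \<eta> N \<kappa>" "N \<ge> 0" "\<eta> i \<ge> 0"
  shows "qq \<eta> N \<kappa> i \<le> 1"
  using is_kappa_denom_pos[OF assms] assms(2,3) by (simp add: qq_def)

lemma qq_less_one:
  assumes "is_kappa \<eta> N \<kappa>" "N > 0" "\<eta> i > 0"
  shows "qq \<eta> N \<kappa> i < 1"
  using is_kappa_denom_pos[OF assms(1)] assms(2,3) by (simp add: qq_def)

lemma gam_bounds:
  assumes "is_kappa \<eta> N \<kappa>" "N > 0" "\<And>i. \<eta> i \<ge> 0"
  shows "0 \<le> gam \<eta> N \<kappa>" "gam \<eta> N \<kappa> < 1"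
proof -
  define u where "u i = \<eta> i / (\<kappa> + N * \<eta> i)" for i
  define t where "t i = N * (\<eta> i)\<^sup>2 / (\<kappa> + N * \<eta> i)\<^sup>2" for i
  have den: "\<kappa> + N * \<eta> i > 0" for i
    using is_kappa_denom_pos assms by (simp add: less_imp_le)
  have \<kappa>: "\<kappa> > 0" using assms(1) by (simp add: is_kappa_def)
  have u_sums: "u sums 1" using assms(1) unfolding is_kappa_def u_def[abs_def] by simp
  have t_nonneg: "0 \<le> t i" for i using assms(2) by (simp add: t_def)
  have u_minus_t: "u i - t i = \<kappa> * \<eta> i / (\<kappa> + N * \<eta> i)\<^sup>2" for i
  proof -
    have "u i - t i = (\<eta> i * (\<kappa> + N * \<eta> i) - N * (\<eta> i)\<^sup>2) / (\<kappa> + N * \<eta> i)\<^sup>2"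
      using den[of i] by (simp add: u_def t_def power2_eq_square diff_divide_distrib)
    also have "\<dots> = \<kappa> * \<eta> i / (\<kappa> + N * \<eta> i)\<^sup>2"
      by (simp add: power2_eq_square algebra_simps)
    finally show ?thesis .
  qed
  have diff_nonneg: "0 \<le> u i - t i" for i
    unfolding u_minus_t using \<kappa> assms(3)[of i] by simp
  have "summable t"
    using t_nonneg diff_nonneg
    by (intro summable_comparison_test[OF _ sums_summable[OF u_sums]]) auto
  then have gam_eq: "gam \<eta> N \<kappa> = 1 - (\<Sum>i. u i - t i)"
    using suminf_diff[OF sums_summable[OF u_sums] \<open>summable t\<close>] sums_unique[OF u_sums]
    unfolding gam_def t_def[symmetric] by linarith
  obtain j where "\<eta> j \<noteq> 0"
    using u_sums sums_0[of u] sums_unique2 by (fastforce simp: u_def)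
  then have "0 < u j - t j"
    unfolding u_minus_t using \<kappa> den[of j] assms(3)[of j] by simp
  then have "0 < (\<Sum>i. u i - t i)"
    using diff_nonneg \<open>summable t\<close> sums_summable[OF u_sums]
    by (subst suminf_pos_iff) (auto intro: summable_diff)
  then show "gam \<eta> N \<kappa> < 1" using gam_eq by simp
  show "0 \<le> gam \<eta> N \<kappa>"
    unfolding gam_def t_def[symmetric] using \<open>summable t\<close> t_nonneg by (rule suminf_nonneg)
qed

lemma qq_mult_le:
  assumes "is_kappa \<eta> N \<kappa>" "N > 0" "\<eta> i \<ge> 0"
  shows "qq \<eta> N \<kappa> i * \<eta> i \<le> \<kappa> / N"
  using is_kappa_denom_pos[OF assms(1) less_imp_le[OF assms(2)] assms(3)] assms
  by (simp add: qq_def is_kappa_def field_simps)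

lemma EBi_nonneg:
  assumes "gam \<eta> N \<kappa> < 1"
  shows "EBi \<eta> N \<kappa> i \<ge> 0"
  using assms by (simp add: EBi_def)

lemma summable_EBi:
  assumes "summable \<eta>" "is_kappa \<eta> N \<kappa>" "N > 0" "\<And>i. \<eta> i \<ge> 0" "gam \<eta> N \<kappa> < 1"
  shows "summable (EBi \<eta> N \<kappa>)"
proof (rule summable_comparison_test)
  show "summable (\<lambda>i. \<kappa> / N / (1 - gam \<eta> N \<kappa>) * \<eta> i)"
    using assms(1) by (rule summable_mult)
  have "EBi \<eta> N \<kappa> i \<le> \<kappa> / N / (1 - gam \<eta> N \<kappa>) * \<eta> i" for i
  proof -
    have q: "0 \<le> qq \<eta> N \<kappa> i" "qq \<eta> N \<kappa> i \<le> 1"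
      using qq_pos qq_le_one assms(2-4) by (auto simp: less_imp_le)
    have "(qq \<eta> N \<kappa> i * \<eta> i) * (qq \<eta> N \<kappa> i * \<eta> i) \<le> \<kappa> / N * \<eta> i"
      using q assms(4)[of i] qq_mult_le[OF assms(2,3,4)] mult_left_le_one_le assms(2,3)
      unfolding is_kappa_def
      by (intro mult_mono) auto
    then have "(qq \<eta> N \<kappa> i * \<eta> i) * (qq \<eta> N \<kappa> i * \<eta> i) / (1 - gam \<eta> N \<kappa>)
        \<le> \<kappa> / N * \<eta> i / (1 - gam \<eta> N \<kappa>)"
      using assms(5) by (intro divide_right_mono) auto
    then show ?thesis
      by (simp add: EBi_def power2_eq_square mult_ac)
  qed
  then show "\<exists>N0. \<forall>n\<ge>N0. norm (EBi \<eta> N \<kappa> n) \<le> \<kappa> / N / (1 - gam \<eta> N \<kappa>) * \<eta> n"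
    using EBi_nonneg[OF assms(5)] by auto
qed

definition transfer_factor :: "real \<Rightarrow> real \<Rightarrow> real \<Rightarrow> real" where
  "transfer_factor \<rho> \<gamma> q = 2 * (1 - \<rho>) * (1 - q) + q\<^sup>2 / (1 - \<gamma>)"

lemma EAB_eq_sum_transfer_factor:
  "EAB \<eta> NA \<kappa>A NB \<kappa>B \<rho> =
     (\<Sum>i. transfer_factor \<rho> (gam \<eta> NA \<kappa>A) (qq \<eta> NA \<kappa>A i) * EBi \<eta> NB \<kappa>B i)"
  by (simp add: EAB_def transfer_factor_def)

lemma abs_transfer_factor_le:
  assumes "0 \<le> q" "q \<le> 1" "\<gamma> < 1"
  shows "\<bar>transfer_factor \<rho> \<gamma> q\<bar> \<le> 2 * \<bar>1 - \<rho>\<bar> + 1 / (1 - \<gamma>)"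
proof -
  have "\<bar>2 * (1 - \<rho>) * (1 - q)\<bar> = 2 * \<bar>1 - \<rho>\<bar> * (1 - q)"
    using assms(2) by (simp only: abs_mult)
  also have "\<dots> \<le> 2 * \<bar>1 - \<rho>\<bar>"
    using assms(1,2) by (intro mult_left_le) auto
  finally have "\<bar>2 * (1 - \<rho>) * (1 - q)\<bar> \<le> 2 * \<bar>1 - \<rho>\<bar>" .
  moreover have "0 \<le> q\<^sup>2 / (1 - \<gamma>)"
    using assms(3) by simp
  moreover have "q\<^sup>2 / (1 - \<gamma>) \<le> 1 / (1 - \<gamma>)"
    using assms by (intro divide_right_mono) (auto simp: power_le_one)
  ultimately show ?thesis
    unfolding transfer_factor_def by linarith
qed

lemma transfer_factor_gt_one:
  assumes "0 \<le> \<gamma>" "\<gamma> < 1" "\<rho> < sqrt \<gamma> / (1 + sqrt \<gamma>)" "q < 1"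
  shows "transfer_factor \<rho> \<gamma> q > 1"
proof -
  define r where "r = sqrt \<gamma>"
  have r: "0 \<le> r" "r < 1" and \<gamma>: "\<gamma> = r\<^sup>2"
    using assms(1,2) by (auto simp: r_def real_sqrt_lt_1_iff)
  have "(1 - \<rho>) * (1 + r) > 1"
    using assms(3) r by (simp add: r_def[symmetric] field_simps)
  then have "2 * (1 - r) * (1 - q) * 1 < 2 * (1 - r) * (1 - q) * ((1 - \<rho>) * (1 + r))"
    using r assms(4) by (intro mult_strict_left_mono) auto
  also have "\<dots> = 2 * (1 - \<rho>) * (1 - \<gamma>) * (1 - q)"
    by (simp add: \<gamma> power2_eq_square algebra_simps)
  finally have "2 * (1 - r) * (1 - q) < 2 * (1 - \<rho>) * (1 - \<gamma>) * (1 - q)"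
    by simp
  moreover have "2 * (1 - r) * (1 - q) + q\<^sup>2 - (1 - \<gamma>) = (q - (1 - r))\<^sup>2"
    by (simp add: \<gamma> power2_eq_square algebra_simps)
  moreover have "(1 - \<gamma>) * transfer_factor \<rho> \<gamma> q = 2 * (1 - \<rho>) * (1 - \<gamma>) * (1 - q) + q\<^sup>2"
    using assms(2) by (simp add: transfer_factor_def distrib_left mult_ac)
  ultimately have "(1 - \<gamma>) * 1 < (1 - \<gamma>) * transfer_factor \<rho> \<gamma> q"
    by (smt (verit) zero_le_power2)
  then show ?thesis
    using assms(2) by simp
qed

lemma suminf_less_suminf_weighted:
  fixes a f :: "nat \<Rightarrow> real"
  assumes "summable a" "\<And>i. 0 \<le> a i" "\<And>i. \<bar>f i\<bar> \<le> C"
    and "\<And>i. a i \<noteq> 0 \<Longrightarrow> f i > 1" and "suminf a > 0"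
  shows "suminf a < (\<Sum>i. f i * a i)"
proof -
  have "summable (\<lambda>i. f i * a i)"
    by (rule summable_comparison_test[OF _ summable_mult[OF assms(1), of C]])
       (use assms(2,3) in \<open>auto simp: abs_mult intro: mult_right_mono\<close>)
  have gain_nonneg: "0 \<le> f i * a i - a i" for i
    using assms(2,4)[of i] by (cases "a i = 0") (auto simp: less_imp_le)
  obtain j where "a j > 0"
    using assms(1,2,5) suminf_pos_iff by blast
  then have "0 < f j * a j - a j"
    using assms(4)[of j] by simp
  then have "0 < (\<Sum>i. f i * a i - a i)"
    using gain_nonneg summable_diff[OF \<open>summable (\<lambda>i. f i * a i)\<close> assms(1)]
    by (subst suminf_pos_iff) auto
  then show ?thesis
    using suminf_diff[OF \<open>summable (\<lambda>i. f i * a i)\<close> assms(1)] by simp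
qed

theorem mainTheorem5:
  fixes \<eta> :: "nat \<Rightarrow> real" and NA NB \<kappa>A \<kappa>B \<rho> :: real
  assumes "\<And>i. \<eta> i \<ge> 0"
    and "summable \<eta>"
    and "NA > 0" and "NB > 0"
    and "is_kappa \<eta> NA \<kappa>A" and "is_kappa \<eta> NB \<kappa>B"
    and "EB \<eta> NB \<kappa>B > 0"
    and "\<rho> < sqrt (gam \<eta> NA \<kappa>A) / (1 + sqrt (gam \<eta> NA \<kappa>A))"
  shows "EAB \<eta> NA \<kappa>A NB \<kappa>B \<rho> > EB \<eta> NB \<kappa>B"
proof -
  have \<gamma>A: "0 \<le> gam \<eta> NA \<kappa>A" "gam \<eta> NA \<kappa>A < 1"
    using gam_bounds[OF assms(5,3,1)] .
  have \<gamma>B: "gam \<eta> NB \<kappa>B < 1"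
    using gam_bounds[OF assms(6,4,1)] by simp
  have "EB \<eta> NB \<kappa>B < (\<Sum>i. transfer_factor \<rho> (gam \<eta> NA \<kappa>A) (qq \<eta> NA \<kappa>A i) * EBi \<eta> NB \<kappa>B i)"
    unfolding EB_def
  proof (rule suminf_less_suminf_weighted)
    show "summable (EBi \<eta> NB \<kappa>B)"
      using summable_EBi[OF assms(2,6,4,1) \<gamma>B] .
    show "0 \<le> EBi \<eta> NB \<kappa>B i" for i
      using EBi_nonneg[OF \<gamma>B] .
    show "\<bar>transfer_factor \<rho> (gam \<eta> NA \<kappa>A) (qq \<eta> NA \<kappa>A i)\<bar> \<le> 2 * \<bar>1 - \<rho>\<bar> + 1 / (1 - gam \<eta> NA \<kappa>A)" for i
      using abs_transfer_factor_le qq_pos qq_le_one assms(1,3,5) \<gamma>A by (simp add: less_imp_le)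
    show "1 < transfer_factor \<rho> (gam \<eta> NA \<kappa>A) (qq \<eta> NA \<kappa>A i)" if "EBi \<eta> NB \<kappa>B i \<noteq> 0" for i
    proof -
      have "\<eta> i > 0"
        using that assms(1)[of i] by (auto simp: EBi_def order_le_less)
      then show ?thesis
        using transfer_factor_gt_one[OF \<gamma>A assms(8)] qq_less_one[OF assms(5,3)] by blast
    qed
    show "0 < suminf (EBi \<eta> NB \<kappa>B)"
      using assms(7) by (simp add: EB_def)
  qed
  then show ?thesis
    by (simp add: EAB_eq_sum_transfer_factor)
qed

end
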